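(* Let $0\le\beta\le1$ and let $f\in\mathcal{A}_{\beta}$ with $f(z)=z+\sum_{n=2}^\infty a_nz^n$, and let $f^{-1}(w)=w+\sum_{n=2}^\infty A_nw^n$ be the inverse of $f$ near $0$, so that $A_2=-a_2$ and $A_3=-a_3+2a_2^2$. Then \[ |A_2|\le\frac{2}{2-\beta}\qquad\text{and}\qquad |A_3|\le\frac{2(8-4\beta-\beta^2)}{(2-\beta)^2(3-2\beta)}. \] Both bounds are sharp (attained by some $f\in\mathcal{A}_\beta$).
   Context: $\mathbb{D}$ is the open unit disk; $\mathcal{A}$ is the class of holomorphic $f$ on $\mathbb{D}$ with $f(0)=0$, $f'(0)=1$. For $\beta\in[0,1]$, $\mathcal{A}_{\beta}=\{f\in\mathcal{A}: \operatorname{Re}\big(\beta\, f(z)/z+(1-\beta)f'(z)\big)>0 \text{ for all } z\in\mathbb{D}\}$. The inverse coefficients $A_n$ are the Taylor coefficients of the local inverse $f^{-1}$ at $0$ (which exists since $f'(0)=1$). *)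

theory Defs
  imports "HOL-Analysis.Analysis"
begin

definition class_A :: "(complex \<Rightarrow> complex) set" where
  "class_A = {f. f holomorphic_on ball 0 1 \<and> f 0 = 0 \<and> deriv f 0 = 1}"

text \<open>The class A_beta. At z = 0 the quotient f z / z is understood as its limit f'(0) = 1,
  where the condition holds automatically; hence only z \<noteq> 0 is required.\<close>
definition class_A_beta :: "real \<Rightarrow> (complex \<Rightarrow> complex) set" where
  "class_A_beta \<beta> = {f \<in> class_A. \<forall>z\<in>ball 0 1. z \<noteq> 0 \<longrightarrow>
      Re (of_real \<beta> * (f z / z) + of_real (1 - \<beta>) * deriv f z) > 0}"

definition local_inverse :: "(complex \<Rightarrow> complex) \<Rightarrow> (complex \<Rightarrow> complex) \<Rightarrow> real \<Rightarrow> bool" where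
  "local_inverse f g r \<longleftrightarrow> 0 < r \<and> g holomorphic_on ball 0 r \<and> g 0 = 0 \<and>
      g ` ball 0 r \<subseteq> ball 0 1 \<and> (\<forall>w\<in>ball 0 r. f (g w) = w)"

definition taylor_coeff :: "(complex \<Rightarrow> complex) \<Rightarrow> nat \<Rightarrow> complex" where
  "taylor_coeff g n = (deriv ^^ n) g 0 / of_nat (fact n)"

end

theory Submission
  imports Defs "HOL-Complex_Analysis.Complex_Analysis"
begin

text \<open>Let \<open>p(z) = \<beta> f(z)/z + (1 - \<beta>) f'(z)\<close>, so that \<open>p(0) = 1\<close>, \<open>Re p > 0\<close> on the
  disk and \<open>p\<^sub>n = (1 + n (1 - \<beta>)) a\<^sub>n\<^sub>+\<^sub>1\<close>. The Schwarz function
  \<open>w = (p - 1)/(p + 1) = c\<^sub>1 z + c\<^sub>2 z\<^sup>2 + \<dots>\<close> gives \<open>p\<^sub>1 = 2 c\<^sub>1\<close> and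
  \<open>p\<^sub>2 = 2 c\<^sub>2 + 2 c\<^sub>1\<^sup>2\<close>, and the Schwarz--Pick estimate at \<open>0\<close> for \<open>w(z)/z\<close> gives
  \<open>|c\<^sub>2| \<le> 1 - |c\<^sub>1|\<^sup>2\<close>. Substituting \<open>a\<^sub>2 = 2 c\<^sub>1/(2 - \<beta>)\<close> and
  \<open>a\<^sub>3 = (2 c\<^sub>2 + 2 c\<^sub>1\<^sup>2)/(3 - 2\<beta>)\<close> into \<open>A\<^sub>2 = -a\<^sub>2\<close> and \<open>A\<^sub>3 = 2 a\<^sub>2\<^sup>2 - a\<^sub>3\<close> writes
  \<open>A\<^sub>3 = K c\<^sub>1\<^sup>2 - L c\<^sub>2\<close> with \<open>K \<ge> L \<ge> 0\<close>, whence
  \<open>|A\<^sub>3| \<le> K |c\<^sub>1|\<^sup>2 + L (1 - |c\<^sub>1|\<^sup>2) \<le> K\<close>. Both bounds are attained by the \<open>f\<close>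
  with \<open>p(z) = (1 + z)/(1 - z)\<close>, i.e. \<open>c\<^sub>1 = 1\<close>, \<open>c\<^sub>2 = 0\<close>.\<close>

section \<open>Schwarz lemma and Caratheodory coefficients\<close>

definition div_z :: "(complex \<Rightarrow> complex) \<Rightarrow> complex \<Rightarrow> complex" where
  "div_z f z = (if z = 0 then deriv f 0 else f z / z)"

lemma div_z_holomorphic:
  assumes "f holomorphic_on S" "open S" "f 0 = 0"
  shows "div_z f holomorphic_on S"
proof -
  have "div_z f = (\<lambda>z. if z = 0 then deriv f 0 else (f z - f 0) / (z - 0))"
    using assms(3) by (simp add: div_z_def fun_eq_iff)
  then show ?thesis
    using pole_lemma_open[OF assms(1,2)] by simp
qed

lemma has_fps_expansion_div_z:
  assumes "f holomorphic_on S" "open S" "0 \<in> S" "f 0 = 0"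
  shows "div_z f has_fps_expansion fps_shift 1 (fps_expansion f 0)"
proof -
  define Q where "Q = fps_expansion (div_z f) 0"
  have Q: "div_z f has_fps_expansion Q"
    unfolding Q_def using div_z_holomorphic[OF assms(1,2,4)] assms(2,3) by blast
  have "f = (\<lambda>z. div_z f z * z)"
    using assms(4) by (auto simp: div_z_def fun_eq_iff)
  then have "f has_fps_expansion Q * fps_X"
    using has_fps_expansion_mult[OF Q has_fps_expansion_fps_X] by simp
  then have "fps_expansion f 0 = Q * fps_X"
    by (rule fps_expansion_eqI)
  then show ?thesis
    using Q by (simp only: fps_shift_times_fps_X')
qed

lemma norm_disk_automorphism_less_1:
  fixes a b :: complex
  assumes "norm a < 1" "norm b < 1"
  shows "norm ((b - a) / (1 - cnj a * b)) < 1"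
proof -
  have "(Re a)\<^sup>2 + (Im a)\<^sup>2 < 1" "(Re b)\<^sup>2 + (Im b)\<^sup>2 < 1"
    using assms by (simp_all add: abs_square_less_1 flip: cmod_power2)
  moreover have "(norm (1 - cnj a * b))\<^sup>2 - (norm (b - a))\<^sup>2
      = (1 - (Re a)\<^sup>2 - (Im a)\<^sup>2) * (1 - (Re b)\<^sup>2 - (Im b)\<^sup>2)"
    unfolding cmod_power2 by (simp add: power2_eq_square algebra_simps)
  ultimately have "(norm (b - a))\<^sup>2 < (norm (1 - cnj a * b))\<^sup>2"
    using mult_pos_pos[of "1 - (Re a)\<^sup>2 - (Im a)\<^sup>2" "1 - (Re b)\<^sup>2 - (Im b)\<^sup>2"] by linarith
  then have "norm (b - a) < norm (1 - cnj a * b)"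
    by (meson norm_ge_zero power_less_imp_less_base)
  then show ?thesis
    by (simp add: norm_divide divide_less_eq_1)
qed

lemma Schwarz_Pick_deriv_0:
  assumes holf: "f holomorphic_on ball 0 1" and lt1: "\<And>z. norm z < 1 \<Longrightarrow> norm (f z) < 1"
  shows "norm (deriv f 0) \<le> 1 - (norm (f 0))\<^sup>2"
proof -
  define a where "a = f 0"
  have a: "norm a < 1"
    using lt1[of 0] by (simp add: a_def)
  have den: "1 - cnj a * f z \<noteq> 0" if "norm z < 1" for z
  proof -
    have "norm a * norm (f z) < 1 * 1"
      using a lt1[OF that] by (intro mult_strict_mono') auto
    then have "norm (cnj a * f z) < 1"
      by (simp add: norm_mult)
    then show ?thesis
      by auto
  qed
  define g where "g z = (f z - a) / (1 - cnj a * f z)" for z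
  have holg: "g holomorphic_on ball 0 1"
    unfolding g_def[abs_def] using den by (intro holomorphic_intros holf) auto
  have "norm (g z) < 1" if "norm z < 1" for z
    unfolding g_def using norm_disk_automorphism_less_1[OF a lt1[OF that]] .
  then have "norm (deriv g 0) \<le> 1"
    using Schwarz_Lemma'[OF holg] by (simp add: g_def a_def)
  have df: "(f has_field_derivative deriv f 0) (at 0)"
    using holf by (intro holomorphic_derivI[of _ "ball 0 1"]) auto
  have "(g has_field_derivative
      deriv f 0 * (1 - cnj a * f 0) / ((1 - cnj a * f 0) * (1 - cnj a * f 0))) (at 0)"
    using DERIV_divide[OF DERIV_diff[OF df DERIV_const[of a]]
        DERIV_diff[OF DERIV_const[of 1] DERIV_cmult[OF df, of "cnj a"]]] den[of 0]
    by (simp add: g_def[abs_def] a_def)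
  moreover have "1 - cnj a * f 0 = of_real (1 - (norm a)\<^sup>2)"
    by (simp add: a_def complex_norm_square mult.commute del: of_real_power)
  ultimately have "deriv g 0 = deriv f 0 / of_real (1 - (norm a)\<^sup>2)"
    using den[of 0] by (simp add: DERIV_imp_deriv)
  moreover have pos: "1 - (norm a)\<^sup>2 > 0"
    using a by (simp add: abs_square_less_1)
  ultimately have "norm (deriv g 0) = norm (deriv f 0) / (1 - (norm a)\<^sup>2)"
    by (simp only: norm_divide norm_of_real abs_of_pos)
  then show ?thesis
    using \<open>norm (deriv g 0) \<le> 1\<close> pos by (simp add: a_def divide_le_eq)
qed

lemma fps_expansion_eq_linear:
  assumes "\<And>z. norm z < 1 \<Longrightarrow> w z = \<alpha> * z"
  shows "fps_expansion w 0 = fps_const \<alpha> * fps_X"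
proof -
  have "eventually (\<lambda>z. z \<in> ball 0 1) (nhds (0::complex))"
    by (intro eventually_nhds_in_open) auto
  then have "eventually (\<lambda>z. \<alpha> * z = w z) (nhds 0)"
    by eventually_elim (use assms in auto)
  then have "w has_fps_expansion fps_const \<alpha> * fps_X"
    using has_fps_expansion_cong has_fps_expansion_cmult_left[OF has_fps_expansion_fps_X] by blast
  then show ?thesis
    by (rule fps_expansion_eqI)
qed

lemma Schwarz_second_coeff:
  assumes holw: "w holomorphic_on ball 0 1" and w0: "w 0 = 0"
    and lt1: "\<And>z. norm z < 1 \<Longrightarrow> norm (w z) < 1"
  shows "norm (fps_nth (fps_expansion w 0) 2) \<le> 1 - (norm (fps_nth (fps_expansion w 0) 1))\<^sup>2"
proof -
  define W where "W = fps_expansion w 0"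
  have W: "w has_fps_expansion W"
    unfolding W_def using holw by (intro has_fps_expansion_fps_expansion) auto
  note Schwarz = Schwarz_Lemma'[OF holw w0 lt1]
  txt \<open>Unless \<open>w\<close> is a rotation, \<open>w(z)/z\<close> maps the disk into itself, so that the
    Schwarz--Pick estimate applies to it.\<close>
  show ?thesis
  proof (cases "\<exists>\<alpha>. (\<forall>z. norm z < 1 \<longrightarrow> w z = \<alpha> * z) \<and> norm \<alpha> = 1")
    case True
    then obtain \<alpha> where \<alpha>: "\<forall>z. norm z < 1 \<longrightarrow> w z = \<alpha> * z" "norm \<alpha> = 1"
      by blast
    then have "W = fps_const \<alpha> * fps_X"
      unfolding W_def by (intro fps_expansion_eq_linear) auto
    then show ?thesis
      using \<alpha>(2) by (simp add: W_def[symmetric])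
  next
    case False
    define q where "q = div_z w"
    have holq: "q holomorphic_on ball 0 1"
      unfolding q_def using holw w0 by (intro div_z_holomorphic) auto
    have "fps_nth W 2 = deriv q 0"
      using fps_nth_fps_expansion[OF has_fps_expansion_div_z[OF holw _ _ w0], of 1]
      by (simp add: q_def W_def numeral_2_eq_2)
    moreover have "q 0 = fps_nth W 1"
      using fps_nth_fps_expansion[OF W, of 1] by (simp add: q_def div_z_def)
    moreover have "norm (q z) < 1" if z: "norm z < 1" for z
    proof (cases "z = 0")
      case True
      then show ?thesis
        using Schwarz False by (auto simp: q_def div_z_def order_le_less)
    next
      case z0: False
      have "norm (w z) < norm z"
        using Schwarz False z z0 by (meson order_le_less)
      then show ?thesis
        using z0 by (simp add: q_def div_z_def norm_divide divide_less_eq_1)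
    qed
    ultimately show ?thesis
      using Schwarz_Pick_deriv_0[OF holq] by (simp add: W_def)
  qed
qed

lemma norm_Cayley_less_1:
  fixes z :: complex
  assumes "Re z > 0"
  shows "norm ((z - 1) / (z + 1)) < 1"
proof -
  have "(norm (z - 1))\<^sup>2 < (norm (z + 1))\<^sup>2"
    unfolding cmod_power2 using assms by (simp add: power2_eq_square algebra_simps)
  then have "norm (z - 1) < norm (z + 1)"
    by (meson norm_ge_zero power_less_imp_less_base)
  then show ?thesis
    by (simp add: norm_divide divide_less_eq_1)
qed

lemma fps_Cayley_relation_nth_1_2:
  fixes P W :: "complex fps"
  assumes "W * (P + 1) = P - 1" "fps_nth W 0 = 0" "fps_nth P 0 = 1"
  shows "fps_nth P 1 = 2 * fps_nth W 1" "fps_nth P 2 = 2 * fps_nth W 2 + 2 * (fps_nth W 1)\<^sup>2"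
proof -
  have "fps_nth (W * (P + 1)) 1 = 2 * fps_nth W 1"
    "fps_nth (W * (P + 1)) 2 = fps_nth W 1 * fps_nth P 1 + 2 * fps_nth W 2"
    using assms(2,3) by (simp_all add: fps_mult_nth numeral_eq_Suc atLeast0AtMost atMost_Suc)
  then show "fps_nth P 1 = 2 * fps_nth W 1" "fps_nth P 2 = 2 * fps_nth W 2 + 2 * (fps_nth W 1)\<^sup>2"
    unfolding assms(1) by (simp_all add: power2_eq_square algebra_simps)
qed

lemma Caratheodory_coeffs_1_2:
  assumes holp: "p holomorphic_on ball 0 1" and p0: "p 0 = 1"
    and re: "\<And>z. z \<in> ball 0 1 \<Longrightarrow> Re (p z) > 0"
  obtains c1 c2 where "fps_nth (fps_expansion p 0) 1 = 2 * c1"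
    "fps_nth (fps_expansion p 0) 2 = 2 * c2 + 2 * c1\<^sup>2" "norm c2 \<le> 1 - (norm c1)\<^sup>2"
proof -
  define w where "w z = (p z - 1) / (p z + 1)" for z
  have nz: "p z + 1 \<noteq> 0" if "z \<in> ball 0 1" for z
  proof
    assume "p z + 1 = 0"
    then have "Re (p z + 1) = 0"
      by simp
    then show False
      using re[OF that] by simp
  qed
  have holw: "w holomorphic_on ball 0 1"
    unfolding w_def[abs_def] using nz by (intro holomorphic_intros holp) auto
  have w0: "w 0 = 0"
    by (simp add: w_def p0)
  have lt1: "norm (w z) < 1" if "norm z < 1" for z
    unfolding w_def using that by (intro norm_Cayley_less_1 re) auto
  define P where "P = fps_expansion p 0"
  define W where "W = fps_expansion w 0"
  have P: "p has_fps_expansion P"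
    unfolding P_def using holp by (intro has_fps_expansion_fps_expansion) auto
  have W: "w has_fps_expansion W"
    unfolding W_def using holw by (intro has_fps_expansion_fps_expansion) auto
  have "eventually (\<lambda>z. z \<in> ball 0 1) (nhds (0::complex))"
    by (intro eventually_nhds_in_open) auto
  then have "eventually (\<lambda>z. w z * (p z + 1) = p z - 1) (nhds 0)"
    by eventually_elim (use nz in \<open>auto simp: w_def\<close>)
  moreover have "(\<lambda>z. w z * (p z + 1)) has_fps_expansion W * (P + 1)"
    by (intro has_fps_expansion_mult has_fps_expansion_add W P has_fps_expansion_1)
  ultimately have "(\<lambda>z. p z - 1) has_fps_expansion W * (P + 1)"
    using has_fps_expansion_cong[of "\<lambda>z. w z * (p z + 1)" "\<lambda>z. p z - 1"] by blast
  moreover have "(\<lambda>z. p z - 1) has_fps_expansion P - 1"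
    by (intro has_fps_expansion_diff P has_fps_expansion_1)
  ultimately have "W * (P + 1) = P - 1"
    by (rule fps_expansion_unique_complex)
  moreover have "fps_nth W 0 = 0" "fps_nth P 0 = 1"
    using fps_nth_fps_expansion[OF W, of 0] fps_nth_fps_expansion[OF P, of 0] w0 p0 by simp_all
  ultimately have "fps_nth P 1 = 2 * fps_nth W 1" "fps_nth P 2 = 2 * fps_nth W 2 + 2 * (fps_nth W 1)\<^sup>2"
    by (rule fps_Cayley_relation_nth_1_2)+
  then show ?thesis
    using that Schwarz_second_coeff[OF holw w0 lt1] unfolding P_def W_def by blast
qed

section \<open>Coefficients of the local inverse\<close>

lemma fps_compose_eq_X_nth_1_2_3:
  fixes F G :: "complex fps"
  assumes "F oo G = fps_X" "fps_nth G 0 = 0" "fps_nth F 1 = 1"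
  shows "fps_nth G 1 = 1" "fps_nth G 2 = - fps_nth F 2"
    "fps_nth G 3 = 2 * (fps_nth F 2)\<^sup>2 - fps_nth F 3"
proof -
  have X: "fps_nth (F oo G) n = (if n = 1 then 1 else 0)" for n
    using assms(1) by simp
  have "fps_nth (F oo G) 1 = fps_nth F 1 * fps_nth G 1"
    using assms(2) by (simp add: fps_compose_nth)
  then show G1: "fps_nth G 1 = 1"
    using X[of 1] assms(3) by simp
  have "fps_nth (F oo G) 2 = fps_nth G 2 + fps_nth F 2 * (fps_nth G 1)\<^sup>2"
    using assms(2,3)
    by (simp add: fps_compose_nth numeral_eq_Suc atLeast0AtMost atMost_Suc fps_mult_nth power2_eq_square)
  then show G2: "fps_nth G 2 = - fps_nth F 2"
    using X[of 2] G1 by (simp add: eq_neg_iff_add_eq_0)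
  have "fps_nth (F oo G) 3 = fps_nth G 3 + fps_nth F 2 * (2 * fps_nth G 1 * fps_nth G 2)
      + fps_nth F 3 * (fps_nth G 1)^3"
    using assms(2,3)
    by (simp add: fps_compose_nth numeral_eq_Suc atLeast0AtMost atMost_Suc fps_mult_nth
        power2_eq_square power3_eq_cube algebra_simps)
  then show "fps_nth G 3 = 2 * (fps_nth F 2)\<^sup>2 - fps_nth F 3"
    using X[of 3] G1 G2 by (simp add: algebra_simps power2_eq_square)
qed

lemma taylor_coeff_eq_fps_nth:
  assumes "g has_fps_expansion G"
  shows "taylor_coeff g n = fps_nth G n"
  using fps_nth_fps_expansion[OF assms] by (simp add: taylor_coeff_def)

lemma local_inverse_taylor_coeff_2_3:
  assumes f: "f \<in> class_A" and g: "local_inverse f g r"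
  shows "taylor_coeff g 2 = - fps_nth (fps_expansion f 0) 2"
    "taylor_coeff g 3 = 2 * (fps_nth (fps_expansion f 0) 2)\<^sup>2 - fps_nth (fps_expansion f 0) 3"
proof -
  define F where "F = fps_expansion f 0"
  define G where "G = fps_expansion g 0"
  have F: "f has_fps_expansion F"
    unfolding F_def using f
    by (intro has_fps_expansion_fps_expansion[of "ball 0 1"]) (auto simp: class_A_def)
  have G: "g has_fps_expansion G"
    unfolding G_def using g
    by (intro has_fps_expansion_fps_expansion[of "ball 0 r"]) (auto simp: local_inverse_def)
  have G0: "fps_nth G 0 = 0" and F1: "fps_nth F 1 = 1"
    using fps_nth_fps_expansion[OF G, of 0] fps_nth_fps_expansion[OF F, of 1] f g
    by (simp_all add: local_inverse_def class_A_def)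
  have "eventually (\<lambda>w. w \<in> ball 0 r) (nhds 0)"
    using g by (intro eventually_nhds_in_open) (auto simp: local_inverse_def)
  then have "eventually (\<lambda>w. w = (f \<circ> g) w) (nhds 0)"
    by eventually_elim (use g in \<open>auto simp: local_inverse_def\<close>)
  then have "(f \<circ> g) has_fps_expansion fps_X"
    using has_fps_expansion_cong[of "\<lambda>w. w" "f \<circ> g"] has_fps_expansion_fps_X by blast
  then have "F oo G = fps_X"
    using has_fps_expansion_compose[OF F G G0] fps_expansion_unique_complex by blast
  note FG = fps_compose_eq_X_nth_1_2_3[OF this G0 F1]
  show "taylor_coeff g 2 = - fps_nth F 2"
    "taylor_coeff g 3 = 2 * (fps_nth F 2)\<^sup>2 - fps_nth F 3"
    using FG taylor_coeff_eq_fps_nth[OF G] by simp_all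
qed

lemma local_inverse_exists:
  assumes "f \<in> class_A"
  obtains g r where "local_inverse f g r"
proof -
  have holf: "f holomorphic_on ball 0 1" and f0: "f 0 = 0" and df0: "deriv f 0 = 1"
    using assms by (auto simp: class_A_def)
  obtain \<rho> where \<rho>: "\<rho> > 0" "ball (0::complex) \<rho> \<subseteq> ball 0 1" "open (f ` ball 0 \<rho>)" "inj_on f (ball 0 \<rho>)"
    by (rule has_complex_derivative_locally_invertible[OF holf, of 0]) (use df0 in auto)
  obtain g where holg: "g holomorphic_on f ` ball 0 \<rho>"
    and gf: "\<And>z. z \<in> ball 0 \<rho> \<Longrightarrow> g (f z) = z"
    by (rule holomorphic_has_inverse[OF holomorphic_on_subset[OF holf \<rho>(2)] open_ball \<rho>(4)]) blast
  have "0 \<in> f ` ball 0 \<rho>"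
    using \<rho>(1) f0 by force
  then obtain r where r: "r > 0" "ball 0 r \<subseteq> f ` ball 0 \<rho>"
    using \<rho>(3) openE by blast
  have "local_inverse f g r"
    unfolding local_inverse_def
  proof (intro conjI ballI subsetI)
    show "g holomorphic_on ball 0 r"
      using holg r(2) by (rule holomorphic_on_subset)
    show "g 0 = 0"
      using gf[of 0] f0 \<rho>(1) by simp
    show "f (g w) = w" if "w \<in> ball 0 r" for w
      using that r(2) gf by auto
    show "y \<in> ball 0 1" if y: "y \<in> g ` ball 0 r" for y
    proof -
      obtain z where "z \<in> ball 0 \<rho>" "y = g (f z)"
        using y r(2) by auto
      then show ?thesis
        using gf \<rho>(2) by auto
    qed
  qed (use r in auto)
  then show ?thesis
    by (rule that)
qed

section \<open>The class A_beta\<close>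

definition beta_mean :: "real \<Rightarrow> (complex \<Rightarrow> complex) \<Rightarrow> complex \<Rightarrow> complex" where
  "beta_mean \<beta> f z = of_real \<beta> * div_z f z + of_real (1 - \<beta>) * deriv f z"

lemma beta_mean_holomorphic:
  assumes "f holomorphic_on S" "open S" "f 0 = 0"
  shows "beta_mean \<beta> f holomorphic_on S"
  unfolding beta_mean_def[abs_def] using assms
  by (intro holomorphic_intros div_z_holomorphic holomorphic_deriv)

lemma fps_expansion_beta_mean_nth:
  assumes "f holomorphic_on S" "open S" "0 \<in> S" "f 0 = 0"
  shows "fps_nth (fps_expansion (beta_mean \<beta> f) 0) n
           = (1 + of_nat n * of_real (1 - \<beta>)) * fps_nth (fps_expansion f 0) (Suc n)"
proof -
  define F where "F = fps_expansion f 0"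
  have "f has_fps_expansion F"
    unfolding F_def using assms by blast
  then have "beta_mean \<beta> f has_fps_expansion
      fps_const (of_real \<beta>) * fps_shift 1 F + fps_const (of_real (1 - \<beta>)) * fps_deriv F"
    unfolding beta_mean_def[abs_def] F_def
    by (intro has_fps_expansion_add has_fps_expansion_cmult_left has_fps_expansion_div_z[OF assms]
        has_fps_expansion_deriv)
  then show ?thesis
    by (simp add: fps_expansion_eqI F_def algebra_simps)
qed

lemma beta_mean_0: "f \<in> class_A \<Longrightarrow> beta_mean \<beta> f 0 = 1"
  by (simp add: beta_mean_def div_z_def class_A_def)

lemma class_A_beta_iff:
  assumes "f \<in> class_A"
  shows "f \<in> class_A_beta \<beta> \<longleftrightarrow> (\<forall>z\<in>ball 0 1. Re (beta_mean \<beta> f z) > 0)"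
proof -
  have "0 < Re (beta_mean \<beta> f z) \<longleftrightarrow>
      (z \<noteq> 0 \<longrightarrow> 0 < Re (of_real \<beta> * (f z / z) + of_real (1 - \<beta>) * deriv f z))" for z
    by (cases "z = 0") (simp add: beta_mean_0[OF assms], simp add: beta_mean_def div_z_def)
  then show ?thesis
    using assms by (simp add: class_A_beta_def)
qed

lemma class_A_beta_fps_nth_2_3:
  assumes "\<beta> \<le> 1" "f \<in> class_A_beta \<beta>"
  obtains c1 c2 where "fps_nth (fps_expansion f 0) 2 = of_real (2 / (2 - \<beta>)) * c1"
    "fps_nth (fps_expansion f 0) 3 = of_real (2 / (3 - 2 * \<beta>)) * (c2 + c1\<^sup>2)"
    "norm c2 \<le> 1 - (norm c1)\<^sup>2"
proof -
  have fA: "f \<in> class_A"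
    using assms(2) by (simp add: class_A_beta_def)
  then have holf: "f holomorphic_on ball 0 1" and f0: "f 0 = 0"
    by (simp_all add: class_A_def)
  note p_nth = fps_expansion_beta_mean_nth[OF holf open_ball _ f0, of \<beta>]
  obtain c1 c2 where c: "fps_nth (fps_expansion (beta_mean \<beta> f) 0) 1 = 2 * c1"
    "fps_nth (fps_expansion (beta_mean \<beta> f) 0) 2 = 2 * c2 + 2 * c1\<^sup>2" "norm c2 \<le> 1 - (norm c1)\<^sup>2"
    using Caratheodory_coeffs_1_2[OF beta_mean_holomorphic[OF holf open_ball f0] beta_mean_0[OF fA]]
      assms(2) class_A_beta_iff[OF fA] by blast
  have "of_real (2 - \<beta>) * fps_nth (fps_expansion f 0) 2 = 2 * c1"
    "of_real (3 - 2 * \<beta>) * fps_nth (fps_expansion f 0) 3 = 2 * (c2 + c1\<^sup>2)"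
    using p_nth[of 1] p_nth[of 2] c(1,2) by (simp_all add: numeral_2_eq_2 numeral_3_eq_3 algebra_simps)
  moreover have "of_real (2 - \<beta>) \<noteq> (0 :: complex)" "of_real (3 - 2 * \<beta>) \<noteq> (0 :: complex)"
    using assms(1) by (simp_all only: of_real_eq_0_iff)
  ultimately have "fps_nth (fps_expansion f 0) 2 = of_real (2 / (2 - \<beta>)) * c1"
    "fps_nth (fps_expansion f 0) 3 = of_real (2 / (3 - 2 * \<beta>)) * (c2 + c1\<^sup>2)"
    by (simp_all add: field_simps del: of_real_diff of_real_mult)
  then show ?thesis
    using that c(3) by blast
qed

lemma class_A_beta_inverse_coeffs:
  assumes "\<beta> \<le> 1" "f \<in> class_A_beta \<beta>" "local_inverse f g r"
  obtains c1 c2 where "taylor_coeff g 2 = - (of_real (2 / (2 - \<beta>)) * c1)"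
    "taylor_coeff g 3 = of_real (8 / (2 - \<beta>)\<^sup>2 - 2 / (3 - 2 * \<beta>)) * c1\<^sup>2 - of_real (2 / (3 - 2 * \<beta>)) * c2"
    "norm c2 \<le> 1 - (norm c1)\<^sup>2"
proof -
  define u v where "u = 2 - \<beta>" and "v = 3 - 2 * \<beta>"
  obtain c1 c2 where a: "fps_nth (fps_expansion f 0) 2 = of_real (2 / u) * c1"
    "fps_nth (fps_expansion f 0) 3 = of_real (2 / v) * (c2 + c1\<^sup>2)" "norm c2 \<le> 1 - (norm c1)\<^sup>2"
    using class_A_beta_fps_nth_2_3[OF assms(1,2)] unfolding u_def v_def by blast
  have "f \<in> class_A"
    using assms(2) by (simp add: class_A_beta_def)
  note A = local_inverse_taylor_coeff_2_3[OF this assms(3)]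
  have "taylor_coeff g 3 = 2 * (of_real (2 / u))\<^sup>2 * c1\<^sup>2 - of_real (2 / v) * (c2 + c1\<^sup>2)"
    by (simp add: A(2) a power_mult_distrib del: of_real_divide)
  also have "\<dots> = of_real (8 / u\<^sup>2 - 2 / v) * c1\<^sup>2 - of_real (2 / v) * c2"
    by (simp add: power_divide algebra_simps)
  finally have "taylor_coeff g 3 = of_real (8 / u\<^sup>2 - 2 / v) * c1\<^sup>2 - of_real (2 / v) * c2" .
  moreover have "taylor_coeff g 2 = - (of_real (2 / u) * c1)"
    using A(1) a(1) by simp
  ultimately show ?thesis
    using that a(3) unfolding u_def v_def by blast
qed

lemma norm_Schwarz_coeff_combination_le:
  fixes c1 c2 :: complex and K L :: real
  assumes c: "norm c2 \<le> 1 - (norm c1)\<^sup>2" and L: "0 \<le> L" "L \<le> K"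
  shows "norm (of_real K * c1\<^sup>2 - of_real L * c2) \<le> K"
proof -
  have c1: "(norm c1)\<^sup>2 \<le> 1"
    using c norm_ge_zero[of c2] by linarith
  have "norm (of_real K * c1\<^sup>2 - of_real L * c2) \<le> K * (norm c1)\<^sup>2 + L * norm c2"
    using norm_triangle_ineq4[of "of_real K * c1\<^sup>2" "of_real L * c2"] L
    by (simp add: norm_mult norm_power)
  also have "\<dots> \<le> K * (norm c1)\<^sup>2 + L * (1 - (norm c1)\<^sup>2)"
    using c L by (intro add_left_mono mult_left_mono) auto
  also have "\<dots> = L + (K - L) * (norm c1)\<^sup>2"
    by (simp add: algebra_simps)
  also have "\<dots> \<le> L + (K - L) * 1"
    using c1 L by (intro add_left_mono mult_left_mono) auto
  finally show ?thesis
    by simp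
qed

lemma class_A_beta_inverse_coeff_bounds:
  fixes \<beta> :: real
  assumes \<beta>: "0 \<le> \<beta>" "\<beta> \<le> 1" and f: "f \<in> class_A_beta \<beta>" and g: "local_inverse f g r"
  shows "norm (taylor_coeff g 2) \<le> 2 / (2 - \<beta>)"
    "norm (taylor_coeff g 3) \<le> 8 / (2 - \<beta>)\<^sup>2 - 2 / (3 - 2 * \<beta>)"
proof -
  obtain c1 c2 where A: "taylor_coeff g 2 = - (of_real (2 / (2 - \<beta>)) * c1)"
    "taylor_coeff g 3 = of_real (8 / (2 - \<beta>)\<^sup>2 - 2 / (3 - 2 * \<beta>)) * c1\<^sup>2 - of_real (2 / (3 - 2 * \<beta>)) * c2"
    and c: "norm c2 \<le> 1 - (norm c1)\<^sup>2"
    using class_A_beta_inverse_coeffs[OF \<beta>(2) f g] by blast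
  have "(norm c1)\<^sup>2 \<le> 1"
    using c norm_ge_zero[of c2] by linarith
  then have "norm c1 \<le> 1"
    using abs_square_le_1[of "norm c1"] by simp
  moreover have "norm (taylor_coeff g 2) = 2 / (2 - \<beta>) * norm c1"
    using \<beta> by (simp only: A(1) norm_minus_cancel norm_mult norm_of_real) simp
  ultimately show "norm (taylor_coeff g 2) \<le> 2 / (2 - \<beta>)"
    using \<beta> mult_left_mono[of "norm c1" 1 "2 / (2 - \<beta>)"] by simp
  have "(2 - \<beta>)\<^sup>2 \<le> 2 * (3 - 2 * \<beta>)"
    using \<beta> mult_le_one[of \<beta> \<beta>] by (simp add: power2_eq_square algebra_simps)
  then have "4 / (3 - 2 * \<beta>) \<le> 8 / (2 - \<beta>)\<^sup>2"
    using \<beta> by (simp add: field_simps)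
  then show "norm (taylor_coeff g 3) \<le> 8 / (2 - \<beta>)\<^sup>2 - 2 / (3 - 2 * \<beta>)"
    unfolding A(2) using \<beta> by (intro norm_Schwarz_coeff_combination_le[OF c]) auto
qed

section \<open>The extremal function\<close>

definition cayley_fps :: "complex fps" where
  "cayley_fps = Abs_fps (\<lambda>n. if n = 0 then 1 else 2)"

lemma eval_fps_of_bounded_coeffs:
  fixes F :: "complex fps"
  assumes "\<And>n. norm (fps_nth F n) \<le> C"
  shows "eval_fps F holomorphic_on ball 0 1" "eval_fps F has_fps_expansion F"
proof -
  have R: "1 \<le> fps_conv_radius F"
    unfolding fps_conv_radius_def
  proof (rule conv_radius_geI_ex')
    fix r :: real
    assume r: "0 < r" "ereal r < 1"
    show "summable (\<lambda>n. fps_nth F n * of_real r ^ n)"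
    proof (rule summable_comparison_test')
      show "summable (\<lambda>n. C * r ^ n)"
        using r by (intro summable_mult summable_geometric) auto
      show "norm (fps_nth F n * of_real r ^ n) \<le> C * r ^ n" for n
        using assms[of n] r by (simp add: norm_mult norm_power mult_right_mono)
    qed
  qed
  then show "eval_fps F holomorphic_on ball 0 1"
    by (intro holomorphic_on_eval_fps ball_eball_mono) (simp add: one_ereal_def)
  have "0 < fps_conv_radius F"
    using R by (rule less_le_trans[rotated]) simp
  then show "eval_fps F has_fps_expansion F"
    by (rule eval_fps_has_fps_expansion)
qed

lemma eval_cayley_fps:
  assumes "norm z < 1"
  shows "eval_fps cayley_fps z = (1 + z) / (1 - z)"
proof -
  have "(\<lambda>n. 2 * z ^ n - (if n = 0 then 1 else 0)) sums (2 * (1 / (1 - z)) - 1)"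
    using sums_diff[OF sums_mult[OF geometric_sums[OF assms]] sums_single[of 0 "\<lambda>_. 1"]] by simp
  moreover have "(\<lambda>n. fps_nth cayley_fps n * z ^ n) = (\<lambda>n. 2 * z ^ n - (if n = 0 then 1 else 0))"
    by (auto simp: cayley_fps_def fun_eq_iff)
  moreover have "1 - z \<noteq> 0"
    using assms by auto
  then have "2 * (1 / (1 - z)) - 1 = (1 + z) / (1 - z)"
    by (simp add: field_simps)
  ultimately show ?thesis
    unfolding eval_fps_def by (simp add: sums_iff)
qed

lemma Re_cayley_pos:
  fixes z :: complex
  assumes "norm z < 1"
  shows "Re ((1 + z) / (1 - z)) > 0"
proof -
  have "(Re z)\<^sup>2 + (Im z)\<^sup>2 < 1"
    using assms by (simp add: abs_square_less_1 flip: cmod_power2)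
  moreover have "Re z < 1"
    using assms abs_Re_le_cmod[of z] by linarith
  then have "(Re (1 - z))\<^sup>2 + (Im (1 - z))\<^sup>2 > 0"
    by (simp add: add_pos_nonneg)
  moreover have "Re (1 + z) * Re (1 - z) + Im (1 + z) * Im (1 - z) = 1 - (Re z)\<^sup>2 - (Im z)\<^sup>2"
    by (simp add: power2_eq_square algebra_simps)
  ultimately show ?thesis
    by (simp add: Re_divide)
qed

text \<open>The relation \<open>p\<^sub>n = (1 + n (1 - \<beta>)) a\<^sub>n\<^sub>+\<^sub>1\<close> of \<open>fps_expansion_beta_mean_nth\<close>,
  solved for \<open>p = cayley_fps\<close>.\<close>
definition extremal_fps :: "real \<Rightarrow> complex fps" where
  "extremal_fps \<beta> = Abs_fps (\<lambda>n. case n of 0 \<Rightarrow> 0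
      | Suc m \<Rightarrow> fps_nth cayley_fps m / of_real (1 + real m * (1 - \<beta>)))"

lemma extremal_fps_nth_le_2:
  assumes "\<beta> \<le> 1"
  shows "norm (fps_nth (extremal_fps \<beta>) n) \<le> 2"
proof (cases n)
  case (Suc m)
  define d where "d = 1 + real m * (1 - \<beta>)"
  have d: "1 \<le> d"
    using assms by (simp add: d_def)
  then have "norm (fps_nth (extremal_fps \<beta>) n) = norm (fps_nth cayley_fps m) / d"
    using Suc by (simp add: extremal_fps_def d_def[symmetric] norm_divide del: of_real_add of_real_mult)
  also have "\<dots> \<le> 2 / 1"
    using d by (intro frac_le) (auto simp: cayley_fps_def)
  finally show ?thesis
    by simp
qed (simp add: extremal_fps_def)

lemma extremal_in_class_A:
  assumes "\<beta> \<le> 1"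
  shows "eval_fps (extremal_fps \<beta>) \<in> class_A"
    "fps_expansion (eval_fps (extremal_fps \<beta>)) 0 = extremal_fps \<beta>"
proof -
  note F = eval_fps_of_bounded_coeffs[OF extremal_fps_nth_le_2[OF assms]]
  show "fps_expansion (eval_fps (extremal_fps \<beta>)) 0 = extremal_fps \<beta>"
    using F(2) by (rule fps_expansion_eqI)
  have "eval_fps (extremal_fps \<beta>) 0 = 0" "deriv (eval_fps (extremal_fps \<beta>)) 0 = 1"
    using fps_nth_fps_expansion[OF F(2), of 1]
    by (simp_all add: eval_fps_at_0 extremal_fps_def cayley_fps_def)
  then show "eval_fps (extremal_fps \<beta>) \<in> class_A"
    using F(1) by (simp add: class_A_def)
qed

lemma beta_mean_extremal:
  assumes "\<beta> \<le> 1" "z \<in> ball 0 1"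
  shows "beta_mean \<beta> (eval_fps (extremal_fps \<beta>)) z = (1 + z) / (1 - z)"
proof -
  define f where "f = eval_fps (extremal_fps \<beta>)"
  have "f \<in> class_A"
    unfolding f_def using assms(1) by (rule extremal_in_class_A)
  then have holf: "f holomorphic_on ball 0 1" and f0: "f 0 = 0"
    by (simp_all add: class_A_def)
  have holp: "beta_mean \<beta> f holomorphic_on ball 0 1"
    using holf f0 by (intro beta_mean_holomorphic) auto
  have "beta_mean \<beta> f has_fps_expansion fps_expansion (beta_mean \<beta> f) 0"
    using holp by (intro has_fps_expansion_fps_expansion) auto
  moreover have "fps_expansion (beta_mean \<beta> f) 0 = cayley_fps"
  proof (rule fps_ext)
    fix n
    have "(1 + of_nat n * (1 - of_real \<beta>) :: complex) = of_real (1 + real n * (1 - \<beta>))"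
      by simp
    moreover have "1 + real n * (1 - \<beta>) > 0"
      using assms(1) by (simp add: add_pos_nonneg)
    ultimately have "1 + of_nat n * (1 - of_real \<beta>) \<noteq> (0 :: complex)"
      by (metis of_real_eq_0_iff less_irrefl)
    moreover have "fps_expansion f 0 = extremal_fps \<beta>"
      unfolding f_def using assms(1) by (rule extremal_in_class_A)
    ultimately show "fps_nth (fps_expansion (beta_mean \<beta> f) 0) n = fps_nth cayley_fps n"
      using fps_expansion_beta_mean_nth[OF holf open_ball _ f0] by (simp add: extremal_fps_def)
  qed
  ultimately have p: "beta_mean \<beta> f has_fps_expansion cayley_fps"
    by simp
  have "norm (fps_nth cayley_fps n) \<le> 2" for n
    by (simp add: cayley_fps_def)
  note Q = eval_fps_of_bounded_coeffs[OF this]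
  have "(deriv ^^ n) (beta_mean \<beta> f) 0 = (deriv ^^ n) (eval_fps cayley_fps) 0" for n
    using fps_nth_fps_expansion[OF p, of n] fps_nth_fps_expansion[OF Q(2), of n] by simp
  then have "beta_mean \<beta> f z = eval_fps cayley_fps z"
    by (rule holomorphic_fun_eq_on_connected[OF holp Q(1) open_ball connected_ball _ _ assms(2)]) simp
  then show ?thesis
    using eval_cayley_fps assms(2) by (simp add: f_def)
qed

lemma extremal_in_class_A_beta:
  assumes "\<beta> \<le> 1"
  shows "eval_fps (extremal_fps \<beta>) \<in> class_A_beta \<beta>"
  using class_A_beta_iff[OF extremal_in_class_A(1)[OF assms]] beta_mean_extremal[OF assms] Re_cayley_pos
  by simp

lemma extremal_inverse_taylor_coeffs:
  assumes "\<beta> \<le> 1" and g: "local_inverse (eval_fps (extremal_fps \<beta>)) g r"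
  shows "taylor_coeff g 2 = - of_real (2 / (2 - \<beta>))"
    "taylor_coeff g 3 = of_real (8 / (2 - \<beta>)\<^sup>2 - 2 / (3 - 2 * \<beta>))"
proof -
  have "fps_nth (extremal_fps \<beta>) 2 = of_real (2 / (2 - \<beta>))"
    "fps_nth (extremal_fps \<beta>) 3 = of_real (2 / (3 - 2 * \<beta>))"
    by (simp_all add: extremal_fps_def cayley_fps_def algebra_simps)
  then show "taylor_coeff g 2 = - of_real (2 / (2 - \<beta>))"
    "taylor_coeff g 3 = of_real (8 / (2 - \<beta>)\<^sup>2 - 2 / (3 - 2 * \<beta>))"
    using local_inverse_taylor_coeff_2_3[OF extremal_in_class_A(1)[OF assms(1)] g]
    by (simp_all add: extremal_in_class_A(2)[OF assms(1)] power_divide)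
qed

lemma inverse_coeff_3_bound_eq:
  fixes \<beta> :: real
  assumes "\<beta> \<le> 1"
  shows "8 / (2 - \<beta>)\<^sup>2 - 2 / (3 - 2 * \<beta>) = 2 * (8 - 4 * \<beta> - \<beta>\<^sup>2) / ((2 - \<beta>)\<^sup>2 * (3 - 2 * \<beta>))"
  using assms by (simp add: field_simps) (simp add: power2_eq_square algebra_simps)

theorem theorem2p2:
  fixes \<beta> :: real
  assumes "0 \<le> \<beta>" and "\<beta> \<le> 1"
  shows "(\<forall>f \<in> class_A_beta \<beta>. \<forall>g r. local_inverse f g r \<longrightarrow>
            cmod (taylor_coeff g 2) \<le> 2 / (2 - \<beta>) \<and>
            cmod (taylor_coeff g 3) \<le> 2 * (8 - 4 * \<beta> - \<beta>\<^sup>2) / ((2 - \<beta>)\<^sup>2 * (3 - 2 * \<beta>)))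
       \<and> (\<exists>f \<in> class_A_beta \<beta>. \<exists>g r. local_inverse f g r \<and>
            cmod (taylor_coeff g 2) = 2 / (2 - \<beta>))
       \<and> (\<exists>f \<in> class_A_beta \<beta>. \<exists>g r. local_inverse f g r \<and>
            cmod (taylor_coeff g 3) = 2 * (8 - 4 * \<beta> - \<beta>\<^sup>2) / ((2 - \<beta>)\<^sup>2 * (3 - 2 * \<beta>)))"
proof -
  define f where "f = eval_fps (extremal_fps \<beta>)"
  have fA: "f \<in> class_A" and fB: "f \<in> class_A_beta \<beta>"
    unfolding f_def using assms(2) by (rule extremal_in_class_A extremal_in_class_A_beta)+
  obtain g r where g: "local_inverse f g r"
    using local_inverse_exists[OF fA] .
  note A = extremal_inverse_taylor_coeffs[OF assms(2) g[unfolded f_def]]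
  note bounds = class_A_beta_inverse_coeff_bounds[OF assms]
  note K = inverse_coeff_3_bound_eq[OF assms(2)]
  have "norm (taylor_coeff g 2) = 2 / (2 - \<beta>)"
    using assms(2) by (simp add: A(1) del: of_real_diff of_real_divide)
  moreover have "norm (taylor_coeff g 3) = \<bar>8 / (2 - \<beta>)\<^sup>2 - 2 / (3 - 2 * \<beta>)\<bar>"
    unfolding A(2) by (rule norm_of_real)
  then have "norm (taylor_coeff g 3) = 2 * (8 - 4 * \<beta> - \<beta>\<^sup>2) / ((2 - \<beta>)\<^sup>2 * (3 - 2 * \<beta>))"
    using bounds(2)[OF fB g] unfolding K by (metis abs_ge_self order_antisym)
  moreover have "\<forall>f \<in> class_A_beta \<beta>. \<forall>g r. local_inverse f g r \<longrightarrow>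
      cmod (taylor_coeff g 2) \<le> 2 / (2 - \<beta>) \<and>
      cmod (taylor_coeff g 3) \<le> 2 * (8 - 4 * \<beta> - \<beta>\<^sup>2) / ((2 - \<beta>)\<^sup>2 * (3 - 2 * \<beta>))"
    using bounds unfolding K by blast
  ultimately show ?thesis
    using fB g by blast
qed

end
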